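(* Let $P=\sum_{i=0}^Nq^iP_i(D)\in\mathbb{C}[q][D]$ with $D=q\frac{d}{dq}$, and let $P_i^{(r)}$ denote the $r$-th formal derivative of the polynomial $P_i$. Let $I=\sum_{0\leq i\leq N,\ j\geq0}a_{ij}h^iq^j$ with $a_{ij}\in\mathbb{C}$, and set $a_{ij}=0$ for $j<0$. Then $I$ is a perturbed solution of $P$ if and only if for every $0\leq s\leq N$ and every $m\in\mathbb{Z}$ $$\sum_{k=0}^s\frac{1}{(s-k)!}\Big(a_{k,m}P^{(s-k)}_N(m)+a_{k,m+1}P^{(s-k)}_{N-1}(m+1)+\cdots+a_{k,m+N}P^{(s-k)}_0(m+N)\Big)=0.$$
   Context: Write $I=\sum_{i=0}^NI^ih^i$ with $I^i=\sum_ja_{ij}q^j$, and put $I_r=\sum_{m=0}^rI^{r-m}\,t^m/m!\in\mathbb{C}[[q]][t]$. Operators act on $\mathbb{C}[[q]][t]$ via $D(f(q)t^m)=qf'(q)t^m+mf(q)t^{m-1}$, with $q$ acting by multiplication. $I$ is a perturbed solution of $P$ if $PI_r=0$ for all $0\leq r\leq N$. *)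

theory Defs
  imports "HOL-Computational_Algebra.Computational_Algebra"
begin

text \<open>Elements of C[[q]][t] are modelled as polynomials in t with formal power series
  (in q) as coefficients: type complex fps poly.\<close>

definition opD :: "complex fps poly \<Rightarrow> complex fps poly" where
  "opD g = map_poly (\<lambda>f. fps_X * fps_deriv f) g + pderiv g"

definition poly_opD :: "complex poly \<Rightarrow> complex fps poly \<Rightarrow> complex fps poly" where
  "poly_opD Q g = (\<Sum>k\<le>degree Q. smult (fps_const (coeff Q k)) ((opD ^^ k) g))"

definition apply_P :: "nat \<Rightarrow> (nat \<Rightarrow> complex poly) \<Rightarrow> complex fps poly \<Rightarrow> complex fps poly" where
  "apply_P N Ps g = (\<Sum>i\<le>N. smult (fps_X ^ i) (poly_opD (Ps i) g))"

definition Icomp :: "(nat \<Rightarrow> nat \<Rightarrow> complex) \<Rightarrow> nat \<Rightarrow> complex fps" where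
  "Icomp a i = Abs_fps (a i)"

definition I_r :: "(nat \<Rightarrow> nat \<Rightarrow> complex) \<Rightarrow> nat \<Rightarrow> complex fps poly" where
  "I_r a r = (\<Sum>m\<le>r. monom (fps_const (1 / fact m) * Icomp a (r - m)) m)"

text \<open>I = sum_{i\<le>N} I^i h^i is a perturbed solution of P.\<close>
definition perturbed_solution :: "nat \<Rightarrow> (nat \<Rightarrow> complex poly) \<Rightarrow> (nat \<Rightarrow> nat \<Rightarrow> complex) \<Rightarrow> bool" where
  "perturbed_solution N Ps a \<longleftrightarrow> (\<forall>r\<le>N. apply_P N Ps (I_r a r) = 0)"

definition aext :: "(nat \<Rightarrow> nat \<Rightarrow> complex) \<Rightarrow> nat \<Rightarrow> int \<Rightarrow> complex" where
  "aext a k j = (if j < 0 then 0 else a k (nat j))"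

end

theory Submission
  imports Defs
begin

text \<open>Measure an element \<open>g\<close> of \<open>\<complex>[[q]][t]\<close> by \<open>ncoeff g t n\<close>, which is \<open>t!\<close> times its
  coefficient of \<open>q^n t^t\<close>. In these coordinates \<open>D\<close> acts on each column \<open>n\<close> as \<open>n + S\<close>,
  with \<open>S\<close> the shift \<open>t \<mapsto> t + 1\<close>, so \<open>Q(D)\<close> acts as \<open>Q(n + S)\<close>, which Taylor's formula
  expands as \<open>\<Sum>\<^sub>\<rho> Q^(\<rho>)(n) / \<rho>! \<cdot> S^\<rho>\<close>; multiplication by \<open>q^i\<close> moves column \<open>n - i\<close> to
  column \<open>n\<close>. Since \<open>ncoeff I\<^sub>r t j = a\<^sub>r\<^sub>-\<^sub>t\<^sub>,\<^sub>j\<close> for \<open>t \<le> r\<close> and \<open>0\<close> otherwise, the coordinate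
  \<open>(t, n)\<close> of \<open>P I\<^sub>r\<close> is the left-hand side of the condition for \<open>s = r - t\<close> and
  \<open>m = n - N\<close>, and it vanishes for \<open>t > r\<close>.\<close>

lemma sum_atMost_reflect: "(\<Sum>i\<le>n. f i) = (\<Sum>i\<le>n. f (n - i))" for n :: nat
  using sum.atLeastAtMost_rev[of f 0 n] by (simp add: atLeast0AtMost)

lemma higher_pderiv_Suc_pCons:
  "(pderiv ^^ Suc r) (pCons c p)
    = pCons 0 ((pderiv ^^ Suc r) p) + smult (of_nat (Suc r)) ((pderiv ^^ r) p)"
  for p :: "'a::idom poly"
proof (induct r)
  case 0
  show ?case by (simp add: pderiv_pCons add.commute)
next
  case (Suc r)
  have "(pderiv ^^ Suc (Suc r)) (pCons c p) = pderiv ((pderiv ^^ Suc r) (pCons c p))"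
    by (simp only: funpow.simps o_apply)
  also have "\<dots> = pCons 0 ((pderiv ^^ Suc (Suc r)) p)
      + smult (of_nat (Suc (Suc r))) ((pderiv ^^ Suc r) p)"
    unfolding Suc
    by (simp add: pderiv_add pderiv_smult pderiv_pCons smult_add_left algebra_simps
        numeral_mult_conv_smult)
  finally show ?case .
qed

lemma poly_higher_pderiv_eq_coeff_pcompose:
  "poly ((pderiv ^^ r) p) x = fact r * coeff (pcompose p [:x, 1:]) r"
  for p :: "'a::{idom,semiring_char_0} poly"
proof (induct p arbitrary: r)
  case 0
  show ?case by simp
next
  case (pCons c p)
  show ?case
  proof (cases r)
    case 0
    then show ?thesis using pCons(2)[of 0] by (simp add: pcompose_pCons)
  next
    case (Suc r')
    have "poly ((pderiv ^^ r) (pCons c p)) x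
        = x * poly ((pderiv ^^ Suc r') p) x + of_nat (Suc r') * poly ((pderiv ^^ r') p) x"
      unfolding Suc higher_pderiv_Suc_pCons by (simp only: poly_add poly_pCons poly_smult add_0_left)
    also have "\<dots> = x * (fact (Suc r') * coeff (pcompose p [:x, 1:]) (Suc r'))
         + of_nat (Suc r') * (fact r' * coeff (pcompose p [:x, 1:]) r')"
      by (simp only: pCons(2))
    also have "\<dots> = fact r * coeff (pcompose (pCons c p) [:x, 1:]) r"
    proof -
      have "coeff (pcompose (pCons c p) [:x, 1:]) (Suc r')
          = x * coeff (pcompose p [:x, 1:]) (Suc r') + coeff (pcompose p [:x, 1:]) r'"
        by (simp add: pcompose_pCons)
      then show ?thesis
        unfolding Suc fact_Suc by (simp add: algebra_simps)
    qed
    finally show ?thesis .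
  qed
qed

lemma coeff_pcompose_linear_eq_higher_pderiv:
  "coeff (pcompose p [:x, 1:]) r = poly ((pderiv ^^ r) p) x / fact r"
  for p :: "'a::field_char_0 poly"
  by (simp add: poly_higher_pderiv_eq_coeff_pcompose)

lemma pcompose_eq_sum_coeff: "pcompose p q = (\<Sum>k\<le>degree p. smult (coeff p k) (q ^ k))"
  for p q :: "'a::comm_semiring_1 poly"
proof -
  have "pcompose (monom c k) q = smult c (q ^ k)" for c k
    by (induct k) (simp_all add: monom_altdef pcompose_smult pcompose_mult pcompose_1 pcompose_pCons)
  then show ?thesis
    by (subst poly_as_sum_of_monoms[symmetric, of p]) (simp add: pcompose_sum)
qed

definition ncoeff :: "complex fps poly \<Rightarrow> nat \<Rightarrow> nat \<Rightarrow> complex" where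
  "ncoeff g t n = fact t * (coeff g t $ n)"

lemma poly_eq_0_iff_ncoeff: "g = 0 \<longleftrightarrow> (\<forall>t n. ncoeff g t n = 0)"
  by (auto simp: ncoeff_def poly_eq_iff fps_eq_iff)

lemma ncoeff_sum: "ncoeff (\<Sum>k\<in>A. g k) t n = (\<Sum>k\<in>A. ncoeff (g k) t n)"
  by (simp add: ncoeff_def coeff_sum fps_sum_nth sum_distrib_left)

lemma ncoeff_smult_fps_const: "ncoeff (smult (fps_const c) g) t n = c * ncoeff g t n"
  by (simp add: ncoeff_def)

lemma ncoeff_smult_fps_X_power:
  "ncoeff (smult (fps_X ^ i) g) t n = (if n < i then 0 else ncoeff g t (n - i))"
  by (simp add: ncoeff_def fps_X_power_mult_nth)

lemma ncoeff_opD: "ncoeff (opD g) t n = of_nat n * ncoeff g t n + ncoeff g (Suc t) n"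
proof -
  have "(fps_X * fps_deriv f) $ n = of_nat n * f $ n" for f :: "complex fps"
    by (cases n) (simp_all add: fps_X_mult_nth)
  then show ?thesis
    by (simp add: ncoeff_def opD_def coeff_map_poly coeff_pderiv algebra_simps)
qed

text \<open>\<open>R(S) h\<close> for the shift \<open>S h t = h (t + 1)\<close>, correct when \<open>h\<close> vanishes beyond \<open>M\<close>.\<close>

definition shift_eval :: "nat \<Rightarrow> 'a::comm_semiring_1 poly \<Rightarrow> (nat \<Rightarrow> 'a) \<Rightarrow> nat \<Rightarrow> 'a" where
  "shift_eval M R h t = (\<Sum>\<rho>\<le>M. coeff R \<rho> * h (t + \<rho>))"

lemma shift_eval_add: "shift_eval M (R + R') h t = shift_eval M R h t + shift_eval M R' h t"
  by (simp add: shift_eval_def sum.distrib algebra_simps)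

lemma shift_eval_smult: "shift_eval M (smult c R) h t = c * shift_eval M R h t"
  by (simp add: shift_eval_def sum_distrib_left algebra_simps)

lemma shift_eval_sum: "shift_eval M (\<Sum>k\<in>A. R k) h t = (\<Sum>k\<in>A. shift_eval M (R k) h t)"
  by (induct A rule: infinite_finite_induct) (simp_all add: shift_eval_def sum.distrib algebra_simps)

lemma shift_eval_pCons_0:
  assumes "\<And>s. M < s \<Longrightarrow> h s = 0"
  shows "shift_eval M (pCons 0 R) h t = shift_eval M R h (Suc t)"
proof -
  have "shift_eval M (pCons 0 R) h t = (\<Sum>\<rho><M. coeff R \<rho> * h (Suc t + \<rho>))"
    unfolding shift_eval_def by (cases M) (simp_all only: sum.atMost_Suc_shift lessThan_Suc_atMost, simp_all)
  also have "\<dots> = shift_eval M R h (Suc t)"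
    using assms by (simp add: shift_eval_def lessThan_Suc_atMost[symmetric])
  finally show ?thesis .
qed

lemma ncoeff_opD_power:
  assumes "\<And>s. M < s \<Longrightarrow> ncoeff g s n = 0"
  shows "ncoeff ((opD ^^ k) g) t n = shift_eval M ([:of_nat n, 1:] ^ k) (\<lambda>s. ncoeff g s n) t"
proof (induct k arbitrary: t)
  case 0
  then show ?case by (simp add: shift_eval_def)
next
  case (Suc k)
  have "[:of_nat n, 1:] ^ Suc k = smult (of_nat n) ([:of_nat n, 1:] ^ k) + pCons 0 ([:of_nat n, 1:] ^ k)"
    by simp
  then show ?case
    using Suc by (simp add: ncoeff_opD shift_eval_add shift_eval_smult shift_eval_pCons_0 assms)
qed

lemma ncoeff_poly_opD:
  assumes "\<And>s. M < s \<Longrightarrow> ncoeff g s n = 0"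
  shows "ncoeff (poly_opD Q g) t n
    = (\<Sum>\<rho>\<le>M. poly ((pderiv ^^ \<rho>) Q) (of_nat n) / fact \<rho> * ncoeff g (t + \<rho>) n)"
proof -
  have "ncoeff (poly_opD Q g) t n = shift_eval M (pcompose Q [:of_nat n, 1:]) (\<lambda>s. ncoeff g s n) t"
    unfolding poly_opD_def pcompose_eq_sum_coeff
    by (simp add: ncoeff_sum ncoeff_smult_fps_const ncoeff_opD_power[of M, OF assms]
        shift_eval_sum shift_eval_smult)
  then show ?thesis
    by (simp add: shift_eval_def coeff_pcompose_linear_eq_higher_pderiv)
qed

lemma ncoeff_apply_P:
  assumes "\<And>s j. M < s \<Longrightarrow> ncoeff g s j = 0"
  shows "ncoeff (apply_P N Ps g) t n = (\<Sum>i\<le>N. if n < i then 0 else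
    (\<Sum>\<rho>\<le>M. poly ((pderiv ^^ \<rho>) (Ps i)) (of_nat (n - i)) / fact \<rho> * ncoeff g (t + \<rho>) (n - i)))"
  unfolding apply_P_def ncoeff_sum ncoeff_smult_fps_X_power
  by (intro sum.cong refl) (simp add: ncoeff_poly_opD[of M, OF assms])

lemma ncoeff_I_r: "ncoeff (I_r a r) t j = (if t \<le> r then a (r - t) j else 0)"
proof -
  have "coeff (I_r a r) t = (if t \<le> r then fps_const (1 / fact t) * Icomp a (r - t) else 0)"
    by (simp add: I_r_def coeff_sum coeff_monom)
  then show ?thesis
    by (simp add: ncoeff_def Icomp_def)
qed

lemma ncoeff_I_r_above: "r < t \<Longrightarrow> ncoeff (I_r a r) t j = 0"
  by (simp add: ncoeff_I_r)

lemma ncoeff_apply_P_I_r_above: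
  assumes "r < t"
  shows "ncoeff (apply_P N Ps (I_r a r)) t n = 0"
  using assms by (auto simp: ncoeff_apply_P[of r, OF ncoeff_I_r_above] ncoeff_I_r intro!: sum.neutral)

definition perturbed_lhs ::
    "nat \<Rightarrow> (nat \<Rightarrow> complex poly) \<Rightarrow> (nat \<Rightarrow> nat \<Rightarrow> complex) \<Rightarrow> nat \<Rightarrow> int \<Rightarrow> complex" where
  "perturbed_lhs N Ps a s m = (\<Sum>k\<le>s. (1 / fact (s - k)) *
     (\<Sum>l\<le>N. aext a k (m + int l) * poly ((pderiv ^^ (s - k)) (Ps (N - l))) (of_int (m + int l))))"

lemma perturbed_lhs_eq_0: "m + int N < 0 \<Longrightarrow> perturbed_lhs N Ps a s m = 0"
  by (simp add: perturbed_lhs_def aext_def)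

lemma perturbed_lhs_conv_sum_Ps: "perturbed_lhs N Ps a s (int n - int N) = (\<Sum>i\<le>N. \<Sum>k\<le>s.
    poly ((pderiv ^^ (s - k)) (Ps i)) (of_int (int n - int i)) / fact (s - k) * aext a k (int n - int i))"
proof -
  have "perturbed_lhs N Ps a s (int n - int N) = (\<Sum>k\<le>s. \<Sum>l\<le>N.
      poly ((pderiv ^^ (s - k)) (Ps (N - l))) (of_int (int n - int (N - l))) / fact (s - k)
        * aext a k (int n - int (N - l)))"
    unfolding perturbed_lhs_def sum_distrib_left
    by (intro sum.cong refl) (simp add: of_nat_diff algebra_simps)
  also have "\<dots> = (\<Sum>k\<le>s. \<Sum>i\<le>N.
      poly ((pderiv ^^ (s - k)) (Ps i)) (of_int (int n - int i)) / fact (s - k) * aext a k (int n - int i))"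
    by (rule sum.cong[OF refl], subst sum_atMost_reflect) (simp add: atMost_iff cong: sum.cong)
  also have "\<dots> = (\<Sum>i\<le>N. \<Sum>k\<le>s.
      poly ((pderiv ^^ (s - k)) (Ps i)) (of_int (int n - int i)) / fact (s - k) * aext a k (int n - int i))"
    by (rule sum.swap)
  finally show ?thesis .
qed

lemma ncoeff_apply_P_I_r:
  assumes "t \<le> r"
  shows "ncoeff (apply_P N Ps (I_r a r)) t n = perturbed_lhs N Ps a (r - t) (int n - int N)"
proof -
  define s where "s = r - t"
  define w where "w i \<rho> = poly ((pderiv ^^ \<rho>) (Ps i)) (of_nat (n - i)) / fact \<rho>" for i \<rho>
  have inner: "(\<Sum>\<rho>\<le>r. w i \<rho> * ncoeff (I_r a r) (t + \<rho>) j)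
      = (\<Sum>k\<le>s. w i (s - k) * a k j)" for i j
  proof -
    have "(\<Sum>\<rho>\<le>r. w i \<rho> * ncoeff (I_r a r) (t + \<rho>) j)
        = (\<Sum>\<rho>\<le>r. if \<rho> \<le> s then w i \<rho> * a (s - \<rho>) j else 0)"
      using assms by (intro sum.cong refl) (auto simp: ncoeff_I_r s_def)
    also have "\<dots> = (\<Sum>\<rho>\<le>s. w i \<rho> * a (s - \<rho>) j)"
      using s_def by (intro sum.mono_neutral_cong_right) auto
    also have "\<dots> = (\<Sum>k\<le>s. w i (s - k) * a k j)"
      by (subst sum_atMost_reflect) simp
    finally show ?thesis .
  qed
  have "ncoeff (apply_P N Ps (I_r a r)) t n
      = (\<Sum>i\<le>N. if n < i then 0 else \<Sum>\<rho>\<le>r. w i \<rho> * ncoeff (I_r a r) (t + \<rho>) (n - i))"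
    unfolding w_def by (rule ncoeff_apply_P[OF ncoeff_I_r_above])
  also have "\<dots> = (\<Sum>i\<le>N. if n < i then 0 else \<Sum>k\<le>s. w i (s - k) * a k (n - i))"
    by (simp only: inner)
  also have "\<dots> = perturbed_lhs N Ps a s (int n - int N)"
  proof -
    have "nat (int n - int i) = n - i" for i
      by simp
    then show ?thesis
      unfolding perturbed_lhs_conv_sum_Ps
      by (intro sum.cong refl) (auto simp: w_def aext_def of_nat_diff intro!: sum.neutral)
  qed
  finally show ?thesis
    by (simp add: s_def)
qed

theorem corollary4p4:
  fixes N :: nat and Ps :: "nat \<Rightarrow> complex poly" and a :: "nat \<Rightarrow> nat \<Rightarrow> complex"
  shows "perturbed_solution N Ps a \<longleftrightarrow>
    (\<forall>s\<le>N. \<forall>m::int.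
       (\<Sum>k\<le>s. (1 / fact (s - k)) *
          (\<Sum>l\<le>N. aext a k (m + int l) *
              poly ((pderiv ^^ (s - k)) (Ps (N - l))) (of_int (m + int l)))) = (0::complex))"
  unfolding perturbed_lhs_def[symmetric]
proof
  assume "perturbed_solution N Ps a"
  then have "ncoeff (apply_P N Ps (I_r a s)) 0 n = 0" if "s \<le> N" for s n
    using that by (simp add: perturbed_solution_def ncoeff_def)
  then have column_eq_0: "perturbed_lhs N Ps a s (int n - int N) = 0" if "s \<le> N" for s n
    using that by (simp add: ncoeff_apply_P_I_r)
  have "perturbed_lhs N Ps a s m = 0" if "s \<le> N" for s m
  proof (cases "m + int N < 0")
    case False
    then have "m = int (nat (m + int N)) - int N"
      by simp
    then show ?thesis
      using column_eq_0 that by metis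
  qed (rule perturbed_lhs_eq_0)
  then show "\<forall>s\<le>N. \<forall>m. perturbed_lhs N Ps a s m = 0"
    by blast
next
  assume "\<forall>s\<le>N. \<forall>m. perturbed_lhs N Ps a s m = 0"
  then have "ncoeff (apply_P N Ps (I_r a r)) t n = 0" if "r \<le> N" for r t n
    using that by (cases "t \<le> r") (simp_all add: ncoeff_apply_P_I_r ncoeff_apply_P_I_r_above)
  then show "perturbed_solution N Ps a"
    unfolding perturbed_solution_def poly_eq_0_iff_ncoeff by blast
qed

end
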